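(* Let $S$ be a $0$-left cancellative semigroup equipped with a homogeneous $N$-valued length function $\ell$. Let $r\in S$ and let $\sigma$ be an unbounded string with $\sigma\cap rS\neq\emptyset$. Then: (i) $r^{-1}*\sigma=\{t\in S: rt\in\sigma\}$ is unbounded; (ii) if $\mu$ is a string with $r^{-1}*\sigma\subseteq\mu$, then $rx\neq0$ for every $x\in\mu$; (iii) if $\sigma$ is a maximal string, then $r^{-1}*\sigma$ is also a maximal string.
   Context: $S$ has zero $0$, $S'=S\setminus\{0\}$; $0$-left cancellative: $st=sr\neq0\Rightarrow t=r$. $\tilde S=S\cup\{1\}$ ($1$ an adjoined identity); $s\mid t$ means $t\in s\tilde S$. A string is a nonempty $\sigma\subseteq S$ with $0\notin\sigma$, closed under divisors, and in which any two elements have a common multiple in $\sigma$; maximal means not properly contained in another string. Let $N$ be a totally ordered set. An $N$-valued length function is $\ell:S'\to N$ such that for $r,s,t\in S'$: (a) $s\mid t\Rightarrow\ell(s)\le\ell(t)$; (b) if $r\mid st\neq0$ and $\ell(r)\le\ell(s)$ then $r\mid s$. A set $X\subseteq S'$ is bounded if $\ell(s)\le n_0$ for all $s\in X$, for some $n_0\in N$. $\ell$ is homogeneous if for every $r\in S$ and every bounded $X\subseteq\{x\in S':rx\neq0\}$, the set $rX$ is bounded. *)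

theory Defs
  imports Main
begin

text \<open>S is modelled as a type 'a of class semigroup_mult with a zero element
(class mult_zero: 0 * a = 0 = a * 0). S' = S - {0}.\<close>

definition zero_left_cancellative :: "('a::{semigroup_mult,mult_zero}) itself \<Rightarrow> bool" where
  "zero_left_cancellative _ \<longleftrightarrow> (\<forall>s t r::'a. s * t = s * r \<and> s * t \<noteq> 0 \<longrightarrow> t = r)"

text \<open>s divides t: t \<in> s (S with adjoined identity), i.e. t = s or t = s u.\<close>
definition sdvd :: "'a::semigroup_mult \<Rightarrow> 'a \<Rightarrow> bool" where
  "sdvd s t \<longleftrightarrow> t = s \<or> (\<exists>u. t = s * u)"

definition is_string :: "('a::{semigroup_mult,mult_zero}) set \<Rightarrow> bool" where
  "is_string \<sigma> \<longleftrightarrow> \<sigma> \<noteq> {} \<and> 0 \<notin> \<sigma>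
     \<and> (\<forall>s t. t \<in> \<sigma> \<and> sdvd s t \<longrightarrow> s \<in> \<sigma>)
     \<and> (\<forall>a\<in>\<sigma>. \<forall>b\<in>\<sigma>. \<exists>c\<in>\<sigma>. sdvd a c \<and> sdvd b c)"

definition is_maximal_string :: "('a::{semigroup_mult,mult_zero}) set \<Rightarrow> bool" where
  "is_maximal_string \<sigma> \<longleftrightarrow> is_string \<sigma> \<and> (\<forall>\<tau>. is_string \<tau> \<and> \<sigma> \<subseteq> \<tau> \<longrightarrow> \<tau> = \<sigma>)"

text \<open>N-valued length function; only its values on S' matter.\<close>
definition length_function :: "('a::{semigroup_mult,mult_zero} \<Rightarrow> 'n::linorder) \<Rightarrow> bool" where
  "length_function len \<longleftrightarrow>
     (\<forall>s t. s \<noteq> 0 \<and> t \<noteq> 0 \<and> sdvd s t \<longrightarrow> len s \<le> len t)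
   \<and> (\<forall>r s t. r \<noteq> 0 \<and> s \<noteq> 0 \<and> t \<noteq> 0 \<and> s * t \<noteq> 0 \<and> sdvd r (s * t) \<and> len r \<le> len s
        \<longrightarrow> sdvd r s)"

definition bounded_by :: "('a::{semigroup_mult,mult_zero} \<Rightarrow> 'n::linorder) \<Rightarrow> 'a set \<Rightarrow> bool" where
  "bounded_by len X \<longleftrightarrow> (\<exists>n0. \<forall>s\<in>X. len s \<le> n0)"

definition homogeneous :: "('a::{semigroup_mult,mult_zero} \<Rightarrow> 'n::linorder) \<Rightarrow> bool" where
  "homogeneous len \<longleftrightarrow> (\<forall>r X. X \<subseteq> {x. x \<noteq> 0 \<and> r * x \<noteq> 0} \<and> bounded_by len X
        \<longrightarrow> bounded_by len ((\<lambda>x. r * x) ` X))"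

definition left_quot :: "'a::semigroup_mult \<Rightarrow> 'a set \<Rightarrow> 'a set" where
  "left_quot r \<sigma> = {t. r * t \<in> \<sigma>}"

end

theory Submission
  imports Defs
begin

text \<open>
Write Q = {t. r t \<in> \<sigma>}.
(i) Every element of \<sigma> divides some r u \<in> \<sigma> (a common multiple with r \<in> \<sigma>), so if Q
were bounded, homogeneity would bound r Q and hence \<sigma>.
(ii) In a string, of two elements the one of larger length is a multiple of the other
(property (b) of the length function), so every x \<in> \<mu> divides elements y of the unbounded
set Q, and r y \<noteq> 0 forces r x \<noteq> 0.
(iii) By (ii) the divisors of r \<mu> form a string containing \<sigma>; maximality of \<sigma> makes
them equal to \<sigma>, whence \<mu> \<subseteq> Q.
\<close>

lemma sdvd_refl [simp]: "sdvd a a"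
  by (simp add: sdvd_def)

lemma sdvd_mult [simp]: "sdvd a (a * u)"
  by (auto simp: sdvd_def)

lemma sdvd_trans: "sdvd a b \<Longrightarrow> sdvd b c \<Longrightarrow> sdvd a c"
  unfolding sdvd_def by (metis mult.assoc)

lemma sdvd_mult_left: "sdvd a b \<Longrightarrow> sdvd (r * a) (r * b)"
  unfolding sdvd_def by (metis mult.assoc)

lemma sdvd_mult_leftE:
  assumes "sdvd (r * a) c"
  obtains a' where "c = r * a'" and "sdvd a a'"
  using assms unfolding sdvd_def by (metis mult.assoc sdvd_mult sdvd_refl)

lemma zero_sdvd_iff: "sdvd (0::'a::{semigroup_mult,mult_zero}) y \<longleftrightarrow> y = 0"
  unfolding sdvd_def by auto

lemma mult_nonzero_if_sdvd:
  fixes x :: "'a::{semigroup_mult,mult_zero}"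
  shows "sdvd x y \<Longrightarrow> r * y \<noteq> 0 \<Longrightarrow> r * x \<noteq> 0"
  unfolding sdvd_def by (metis mult.assoc mult_zero_left)

lemma string_nonzero: "is_string \<sigma> \<Longrightarrow> s \<in> \<sigma> \<Longrightarrow> s \<noteq> 0"
  unfolding is_string_def by blast

lemma string_sdvd_closed: "is_string \<sigma> \<Longrightarrow> t \<in> \<sigma> \<Longrightarrow> sdvd s t \<Longrightarrow> s \<in> \<sigma>"
  unfolding is_string_def by blast

lemma string_common_multiple:
  assumes "is_string \<sigma>" and "a \<in> \<sigma>" and "b \<in> \<sigma>"
  obtains c where "c \<in> \<sigma>" and "sdvd a c" and "sdvd b c"
  using assms unfolding is_string_def by blast

lemma length_function_mono:
  "length_function len \<Longrightarrow> s \<noteq> 0 \<Longrightarrow> t \<noteq> 0 \<Longrightarrow> sdvd s t \<Longrightarrow> len s \<le> len t"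
  unfolding length_function_def by blast

lemma string_sdvd_if_len_less:
  assumes len: "length_function len" and \<mu>: "is_string \<mu>"
    and x: "x \<in> \<mu>" and y: "y \<in> \<mu>" and less: "len x < len y"
  shows "sdvd x y"
proof -
  obtain c where c: "c \<in> \<mu>" "sdvd x c" "sdvd y c"
    using string_common_multiple[OF \<mu> x y] .
  show ?thesis
  proof (cases "c = y")
    case False
    then obtain v where v: "c = y * v"
      using c(3) unfolding sdvd_def by auto
    have "c \<noteq> 0" "x \<noteq> 0" "y \<noteq> 0"
      using c(1) x y string_nonzero[OF \<mu>] by auto
    then show ?thesis
      using len less c(2) v unfolding length_function_def by (metis less_imp_le mult_zero_right)
  qed (use c in simp)
qed

lemma string_elem_sdvd_left_mult:
  assumes \<sigma>: "is_string \<sigma>" and rt: "r * t \<in> \<sigma>" and s: "s \<in> \<sigma>"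
  obtains u where "r * u \<in> \<sigma>" and "sdvd s (r * u)"
proof -
  have "r \<in> \<sigma>"
    using string_sdvd_closed[OF \<sigma> rt] by simp
  then obtain c where c: "c \<in> \<sigma>" "sdvd r c" "sdvd s c"
    using string_common_multiple[OF \<sigma> _ s] by blast
  show ?thesis
  proof (cases "c = r")
    case True
    then show ?thesis
      using that[OF rt] c(3) sdvd_trans sdvd_mult by metis
  next
    case False
    then obtain u where "c = r * u"
      using c(2) unfolding sdvd_def by auto
    then show ?thesis
      using that c by blast
  qed
qed

lemma left_quot_unbounded:
  assumes len: "length_function len" and hom: "homogeneous len"
    and \<sigma>: "is_string \<sigma>" and unbounded: "\<not> bounded_by len \<sigma>" and rt: "r * t \<in> \<sigma>"
  shows "\<not> bounded_by len (left_quot r \<sigma>)"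
proof
  assume "bounded_by len (left_quot r \<sigma>)"
  moreover have "left_quot r \<sigma> \<subseteq> {x. x \<noteq> 0 \<and> r * x \<noteq> 0}"
    using string_nonzero[OF \<sigma>] by (auto simp: left_quot_def) (metis mult_zero_right)
  ultimately have "bounded_by len ((\<lambda>x. r * x) ` left_quot r \<sigma>)"
    using hom unfolding homogeneous_def by blast
  then obtain n where n: "\<And>u. r * u \<in> \<sigma> \<Longrightarrow> len (r * u) \<le> n"
    unfolding bounded_by_def left_quot_def by auto
  have "len s \<le> n" if s: "s \<in> \<sigma>" for s
  proof -
    obtain u where u: "r * u \<in> \<sigma>" "sdvd s (r * u)"
      using string_elem_sdvd_left_mult[OF \<sigma> rt s] .
    have "len s \<le> len (r * u)"
      using length_function_mono[OF len] u s string_nonzero[OF \<sigma>] by blast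
    also have "\<dots> \<le> n"
      using n u(1) .
    finally show ?thesis .
  qed
  then show False
    using unbounded unfolding bounded_by_def by blast
qed

lemma string_superset_of_unbounded_mult_nonzero:
  assumes len: "length_function len" and \<mu>: "is_string \<mu>"
    and Y: "Y \<subseteq> \<mu>" "\<not> bounded_by len Y" and nonzero: "\<And>y. y \<in> Y \<Longrightarrow> r * y \<noteq> 0"
    and x: "x \<in> \<mu>"
  shows "r * x \<noteq> 0"
proof -
  obtain y where y: "y \<in> Y" "len x < len y"
    using Y(2) unfolding bounded_by_def by (meson not_le)
  then have "sdvd x y"
    using string_sdvd_if_len_less[OF len \<mu> x] Y(1) by blast
  then show ?thesis
    using mult_nonzero_if_sdvd nonzero[OF y(1)] by blast
qed

lemma is_string_left_quot:
  assumes canc: "zero_left_cancellative TYPE('a::{semigroup_mult,mult_zero})"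
    and \<sigma>: "is_string (\<sigma> :: 'a set)" and rt: "r * t \<in> \<sigma>"
  shows "is_string (left_quot r \<sigma>)"
  unfolding is_string_def
proof (intro conjI allI impI ballI)
  show "left_quot r \<sigma> \<noteq> {}"
    using rt by (auto simp: left_quot_def)
  show "0 \<notin> left_quot r \<sigma>"
    using string_nonzero[OF \<sigma>] by (auto simp: left_quot_def)
  fix s t
  assume "t \<in> left_quot r \<sigma> \<and> sdvd s t"
  then have "r * t \<in> \<sigma>" and "sdvd (r * s) (r * t)"
    by (auto simp: left_quot_def sdvd_mult_left)
  then show "s \<in> left_quot r \<sigma>"
    using string_sdvd_closed[OF \<sigma>] by (simp add: left_quot_def)
next
  fix a b
  assume "a \<in> left_quot r \<sigma>" "b \<in> left_quot r \<sigma>"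
  then obtain c where c: "c \<in> \<sigma>" "sdvd (r * a) c" "sdvd (r * b) c"
    using string_common_multiple[OF \<sigma>] by (auto simp: left_quot_def)
  obtain a' where a': "c = r * a'" "sdvd a a'"
    using c(2) by (rule sdvd_mult_leftE)
  obtain b' where b': "c = r * b'" "sdvd b b'"
    using c(3) by (rule sdvd_mult_leftE)
  have "a' = b'"
    using canc a' b' c(1) string_nonzero[OF \<sigma>] unfolding zero_left_cancellative_def by metis
  then show "\<exists>c\<in>left_quot r \<sigma>. sdvd a c \<and> sdvd b c"
    using a' b' c(1) by (auto simp: left_quot_def)
qed

definition divisor_closure :: "'a::semigroup_mult set \<Rightarrow> 'a set" where
  "divisor_closure X = {s. \<exists>x\<in>X. sdvd s x}"

lemma mem_divisor_closure_iff: "s \<in> divisor_closure X \<longleftrightarrow> (\<exists>x\<in>X. sdvd s x)"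
  by (simp add: divisor_closure_def)

lemma is_string_divisor_closure_left_mult:
  assumes \<mu>: "is_string \<mu>" and nonzero: "\<forall>x\<in>\<mu>. r * x \<noteq> 0"
  shows "is_string (divisor_closure ((\<lambda>x. r * x) ` \<mu>))" (is "is_string ?\<tau>")
  unfolding is_string_def
proof (intro conjI allI impI ballI)
  obtain x where "x \<in> \<mu>"
    using \<mu> unfolding is_string_def by blast
  then have "r * x \<in> ?\<tau>"
    unfolding mem_divisor_closure_iff by (meson image_eqI sdvd_refl)
  then show "?\<tau> \<noteq> {}"
    by blast
  show "0 \<notin> ?\<tau>"
    using nonzero by (auto simp: mem_divisor_closure_iff zero_sdvd_iff)
  fix s t
  assume "t \<in> ?\<tau> \<and> sdvd s t"
  then show "s \<in> ?\<tau>"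
    unfolding mem_divisor_closure_iff by (meson sdvd_trans)
next
  fix a b
  assume "a \<in> ?\<tau>" "b \<in> ?\<tau>"
  then obtain x1 x2 where x: "x1 \<in> \<mu>" "x2 \<in> \<mu>" "sdvd a (r * x1)" "sdvd b (r * x2)"
    by (auto simp: mem_divisor_closure_iff)
  obtain x3 where x3: "x3 \<in> \<mu>" "sdvd x1 x3" "sdvd x2 x3"
    using string_common_multiple[OF \<mu> x(1,2)] .
  have "r * x3 \<in> ?\<tau>"
    using x3(1) unfolding mem_divisor_closure_iff by (meson image_eqI sdvd_refl)
  moreover have "sdvd a (r * x3)" "sdvd b (r * x3)"
    using x x3 by (meson sdvd_trans sdvd_mult_left)+
  ultimately show "\<exists>c\<in>?\<tau>. sdvd a c \<and> sdvd b c"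
    by blast
qed

lemma left_quot_maximal:
  assumes len: "length_function len" and canc: "zero_left_cancellative TYPE('a::{semigroup_mult,mult_zero})"
    and \<sigma>: "is_maximal_string (\<sigma> :: 'a set)" and rt: "r * t \<in> \<sigma>"
    and unbounded: "\<not> bounded_by len (left_quot r \<sigma>)"
  shows "is_maximal_string (left_quot r \<sigma>)"
  unfolding is_maximal_string_def
proof (intro conjI allI impI)
  have \<sigma>_string: "is_string \<sigma>"
    using \<sigma> unfolding is_maximal_string_def by blast
  show "is_string (left_quot r \<sigma>)"
    using is_string_left_quot[OF canc \<sigma>_string rt] .
  fix \<mu>
  assume \<mu>: "is_string \<mu> \<and> left_quot r \<sigma> \<subseteq> \<mu>"
  define \<tau> where "\<tau> = divisor_closure ((\<lambda>x. r * x) ` \<mu>)"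
  have "\<forall>x\<in>\<mu>. r * x \<noteq> 0"
    using string_superset_of_unbounded_mult_nonzero[OF len _ _ unbounded] \<mu>
      string_nonzero[OF \<sigma>_string] by (auto simp: left_quot_def)
  then have "is_string \<tau>"
    using is_string_divisor_closure_left_mult \<mu> \<tau>_def by blast
  moreover have "\<sigma> \<subseteq> \<tau>"
  proof
    fix s
    assume "s \<in> \<sigma>"
    then obtain u where "r * u \<in> \<sigma>" "sdvd s (r * u)"
      using string_elem_sdvd_left_mult[OF \<sigma>_string rt] by blast
    then show "s \<in> \<tau>"
      using \<mu> unfolding \<tau>_def mem_divisor_closure_iff left_quot_def by blast
  qed
  ultimately have "\<tau> = \<sigma>"
    using \<sigma> unfolding is_maximal_string_def by blast
  moreover have "r * x \<in> \<tau>" if "x \<in> \<mu>" for x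
    using that unfolding \<tau>_def mem_divisor_closure_iff by (meson image_eqI sdvd_refl)
  ultimately have "\<mu> \<subseteq> left_quot r \<sigma>"
    by (auto simp: left_quot_def)
  then show "\<mu> = left_quot r \<sigma>"
    using \<mu> by blast
qed

theorem lemma13p3:
  fixes len :: "'a::{semigroup_mult,mult_zero} \<Rightarrow> 'n::linorder"
    and r :: 'a and \<sigma> :: "'a set"
  assumes "zero_left_cancellative TYPE('a)"
    and "length_function len"
    and "homogeneous len"
    and "is_string \<sigma>"
    and "\<not> bounded_by len \<sigma>"
    and "\<sigma> \<inter> (\<lambda>t. r * t) ` UNIV \<noteq> {}"
  shows "(\<not> bounded_by len (left_quot r \<sigma>))
    \<and> (\<forall>\<mu>. is_string \<mu> \<and> left_quot r \<sigma> \<subseteq> \<mu> \<longrightarrow> (\<forall>x\<in>\<mu>. r * x \<noteq> 0))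
    \<and> (is_maximal_string \<sigma> \<longrightarrow> is_maximal_string (left_quot r \<sigma>))"
proof -
  obtain t where rt: "r * t \<in> \<sigma>"
    using assms(6) by auto
  have unbounded: "\<not> bounded_by len (left_quot r \<sigma>)"
    using left_quot_unbounded[OF assms(2,3,4,5) rt] .
  have "\<forall>x\<in>\<mu>. r * x \<noteq> 0" if "is_string \<mu>" "left_quot r \<sigma> \<subseteq> \<mu>" for \<mu>
    using string_superset_of_unbounded_mult_nonzero[OF assms(2) that unbounded]
      string_nonzero[OF assms(4)] by (auto simp: left_quot_def)
  moreover have "is_maximal_string (left_quot r \<sigma>)" if "is_maximal_string \<sigma>"
    using left_quot_maximal[OF assms(2,1) that rt unbounded] .
  ultimately show ?thesis
    using unbounded by blast
qed

end
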